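(* Let $n\ge2$ and let $\chi_{n-1}$ be the irreducible character of the symmetric group $S_n$ of dimension $n-1$ such that the character of the standard $n$-dimensional permutation representation of $S_n$ equals $1+\chi_{n-1}$. Then for every $g\in S_n$, $$c(g)\le\frac1n\Big(1+\frac{\chi_{n-1}(g)}{(n-1)^2}\Big),$$ and $$c(S_n)\le\frac{1}{n-1}.$$
   Context: For a finite group $G$ and $g\in G$, $c(g)=|\{(x,y)\in G\times G:[x,y]=g\}|/|G|^2$, and $c(G)=c(1)$. *)

theory Defs
  imports Complex_Main "HOL-Algebra.Sym_Groups"
begin

definition commutator :: "('a, 'b) monoid_scheme \<Rightarrow> 'a \<Rightarrow> 'a \<Rightarrow> 'a" where
  "commutator G x y = inv\<^bsub>G\<^esub> x \<otimes>\<^bsub>G\<^esub> inv\<^bsub>G\<^esub> y \<otimes>\<^bsub>G\<^esub> x \<otimes>\<^bsub>G\<^esub> y"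

definition comm_prob :: "('a, 'b) monoid_scheme \<Rightarrow> 'a \<Rightarrow> real" where
  "comm_prob G g =
     real (card {(x, y). x \<in> carrier G \<and> y \<in> carrier G \<and> commutator G x y = g})
     / real (card (carrier G)) ^ 2"

text \<open>Character of the standard permutation representation of S_n on {1..n}:
  the trace of the permutation matrix, i.e. the number of fixed points.\<close>
definition perm_char :: "nat \<Rightarrow> (nat \<Rightarrow> nat) \<Rightarrow> real" where
  "perm_char n g = real (card {i \<in> {1..n}. g i = i})"

definition chi_std :: "nat \<Rightarrow> (nat \<Rightarrow> nat) \<Rightarrow> real" where
  "chi_std n g = perm_char n g - 1"

end

theory Submission
  imports Defs
begin

(* Let N(i, j) be the number of pairs (x, y) of permutations of an n-set whose commutator
   sends i to j. A pair with [x, y] = g is counted in N(i, g i) for every point i, so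
   n * #{(x, y). [x, y] = g} <= sum_i N(i, g i).
   N(i, i) counts the pairs with x (y i) = y (x i): for fixed x, y must carry the arrow
   i -> x i to an arrow j -> x j that is a loop exactly when i -> x i is, and counting these
   gives N(i, i) = (n!)^2 / (n - 1). Conjugating by a transposition that fixes i shows that
   N(i, j) takes one common value for j <> i, and since sum_j N(i, j) = (n!)^2 this value is
   (n - 2) (n!)^2 / (n - 1)^2. The fixed points of g contribute the first value and the
   other points the second, which gives the bound on c(g); at g = 1 it reads 1 / (n - 1). *)

lemma card_eq_sum_card_fibres:
  assumes "finite X" "finite A" "f ` X \<subseteq> A"
  shows "card X = (\<Sum>a\<in>A. card {x\<in>X. f x = a})"
  using sum_fun_comp[OF assms, of "\<lambda>_. 1 :: nat"] by simp

lemma sum_card_filter_swap: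
  assumes "finite X" "finite Y"
  shows "(\<Sum>x\<in>X. card {y\<in>Y. Q x y}) = (\<Sum>y\<in>Y. card {x\<in>X. Q x y})"
proof -
  have "(\<Sum>x\<in>X. card {y\<in>Y. Q x y}) = (\<Sum>x\<in>X. \<Sum>y\<in>Y. if Q x y then 1 else 0)"
    using assms by (simp add: sum.If_cases Int_def)
  also have "\<dots> = (\<Sum>y\<in>Y. \<Sum>x\<in>X. if Q x y then 1 else 0)"
    by (rule sum.swap)
  also have "\<dots> = (\<Sum>y\<in>Y. card {x\<in>X. Q x y})"
    using assms by (simp add: sum.If_cases Int_def)
  finally show ?thesis .
qed

section \<open>Counting permutations by prescribed values and fixed points\<close>

lemma card_permutes_value_reduce:
  assumes "u \<in> S" "v \<in> S"
  shows "card {p. p permutes S \<and> p u = v \<and> R p}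
       = card {q. q permutes S - {u} \<and> R (transpose u v \<circ> q)}"
proof -
  let ?t = "transpose u v"
  have "{p. p permutes S \<and> p u = v \<and> R p} = (\<circ>) ?t ` {q. q permutes S - {u} \<and> R (?t \<circ> q)}"
  proof (intro subset_antisym subsetI)
    fix p assume p: "p \<in> {p. p permutes S \<and> p u = v \<and> R p}"
    have "?t \<circ> p permutes S"
      using p assms by (simp add: permutes_compose permutes_swap_id)
    then have "?t \<circ> p permutes S - {u}"
      by (rule permutes_superset) (use p in auto)
    moreover have "p = ?t \<circ> (?t \<circ> p)"
      by (simp add: fun_eq_iff)
    ultimately show "p \<in> (\<circ>) ?t ` {q. q permutes S - {u} \<and> R (?t \<circ> q)}"
      using p by (intro image_eqI[of _ _ "?t \<circ> p"]) auto
  next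
    fix p assume "p \<in> (\<circ>) ?t ` {q. q permutes S - {u} \<and> R (?t \<circ> q)}"
    then obtain q where q: "q permutes S - {u}" "R (?t \<circ> q)" and p: "p = ?t \<circ> q"
      by blast
    have "q permutes S"
      using q(1) by (rule permutes_subset) auto
    then show "p \<in> {p. p permutes S \<and> p u = v \<and> R p}"
      using q p assms by (simp add: permutes_compose permutes_swap_id permutes_not_in)
  qed
  moreover have "inj_on ((\<circ>) ?t) {q. q permutes S - {u} \<and> R (?t \<circ> q)}"
    by (rule inj_onI) (auto simp: fun_eq_iff dest: transpose_eq_imp_eq)
  ultimately show ?thesis
    by (simp add: card_image)
qed

lemma card_permutes_value:
  assumes "finite S" "u \<in> S" "v \<in> S"
  shows "card {p. p permutes S \<and> p u = v} = fact (card S - 1)"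
  using card_permutes_value_reduce[OF assms(2,3), of "\<lambda>_. True"] assms
  by (simp add: card_permutations[OF refl])

lemma card_permutes_two_values:
  assumes "finite S" "u \<in> S" "v \<in> S" "u' \<in> S" "v' \<in> S" "u \<noteq> u'" "v \<noteq> v'"
  shows "card {p. p permutes S \<and> p u = v \<and> p u' = v'} = fact (card S - 2)"
proof -
  have "card {p. p permutes S \<and> p u = v \<and> p u' = v'}
      = card {q. q permutes S - {u} \<and> (transpose u v \<circ> q) u' = v'}"
    using card_permutes_value_reduce[OF assms(2,3)] .
  also have "{q. q permutes S - {u} \<and> (transpose u v \<circ> q) u' = v'}
           = {q. q permutes S - {u} \<and> q u' = transpose u v v'}"
    by (intro Collect_cong conj_cong refl) auto
  also have "card \<dots> = fact (card (S - {u}) - 1)"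
    using assms by (intro card_permutes_value) (auto simp: transpose_def)
  also have "card (S - {u}) - 1 = card S - 2"
    using assms by simp
  finally show ?thesis .
qed

lemma sum_card_fixpoints_permutes:
  assumes "finite S" "S \<noteq> {}"
  shows "(\<Sum>p\<in>{p. p permutes S}. card {j\<in>S. p j = j}) = fact (card S)"
proof -
  have "(\<Sum>p\<in>{p. p permutes S}. card {j\<in>S. p j = j})
      = (\<Sum>j\<in>S. card {p\<in>{p. p permutes S}. p j = j})"
    using finite_permutations[OF assms(1)] assms(1) by (rule sum_card_filter_swap)
  also have "\<dots> = (\<Sum>j\<in>S. fact (card S - 1))"
    using card_permutes_value[OF assms(1)] by (intro sum.cong) auto
  also have "\<dots> = fact (card S)"
    using assms by (simp add: fact_reduce[of "card S"] card_gt_0_iff)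
  finally show ?thesis .
qed

lemma permutes_fixing_iff:
  assumes "i \<in> S"
  shows "p permutes S \<and> p i = i \<longleftrightarrow> p permutes S - {i}"
  using assms permutes_superset[of p S "S - {i}"] permutes_subset[of p "S - {i}" S]
  by (auto simp: permutes_not_in)

lemma sum_card_fixpoints_stabilizer:
  assumes "finite S" "card S \<ge> 2" "i \<in> S"
  shows "(\<Sum>p\<in>{p. p permutes S \<and> p i = i}. card {j\<in>S. p j = j}) = 2 * fact (card S - 1)"
proof -
  have stab: "{p. p permutes S \<and> p i = i} = {p. p permutes S - {i}}"
    using permutes_fixing_iff[OF assms(3)] by blast
  have "card {j\<in>S. p j = j} = 1 + card {j\<in>S - {i}. p j = j}" if "p i = i" for p
  proof -
    have "{j\<in>S. p j = j} = insert i {j\<in>S - {i}. p j = j}"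
      using that assms(3) by auto
    then show ?thesis
      using assms(1) by simp
  qed
  then have "(\<Sum>p\<in>{p. p permutes S \<and> p i = i}. card {j\<in>S. p j = j})
      = (\<Sum>p\<in>{p. p permutes S - {i}}. 1 + card {j\<in>S - {i}. p j = j})"
    unfolding stab by (intro sum.cong) (auto simp: permutes_not_in)
  also have "\<dots> = card {p. p permutes S - {i}}
                + (\<Sum>p\<in>{p. p permutes S - {i}}. card {j\<in>S - {i}. p j = j})"
    by (simp only: sum.distrib card_eq_sum)
  also have "\<dots> = card {p. p permutes S - {i}} + fact (card (S - {i}))"
    using assms card_mono[of "{i}" S] by (subst sum_card_fixpoints_permutes) auto
  also have "\<dots> = 2 * fact (card S - 1)"
    using assms by (simp add: card_permutations[OF refl])
  finally show ?thesis .
qed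

lemma permutes_commuting_at_fixpoint_iff:
  assumes "y permutes S" "y (x i) = x (y i)"
  shows "x (y i) = y i \<longleftrightarrow> x i = i"
  using permutes_inj[OF assms(1)] by (simp add: inj_eq flip: assms(2))

lemma card_permutes_commuting_at_value:
  assumes "finite S" "i \<in> S" "x permutes S" "j \<in> S" "x j = j \<longleftrightarrow> x i = i"
  shows "card {y. y permutes S \<and> y (x i) = x (y i) \<and> y i = j}
       = fact (card S - (if x i = i then 1 else 2))"
proof (cases "x i = i")
  case True
  then have "{y. y permutes S \<and> y (x i) = x (y i) \<and> y i = j} = {y. y permutes S \<and> y i = j}"
    using assms(5) by auto
  then show ?thesis
    using card_permutes_value[OF assms(1,2,4)] True by simp
next
  case False
  have "x i \<in> S" "x j \<in> S"
    using assms(2-4) by (simp_all add: permutes_in_image)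
  then have "card {y. y permutes S \<and> y i = j \<and> y (x i) = x j} = fact (card S - 2)"
    using assms False by (intro card_permutes_two_values) auto
  moreover have "{y. y permutes S \<and> y (x i) = x (y i) \<and> y i = j}
      = {y. y permutes S \<and> y i = j \<and> y (x i) = x j}"
    by auto
  ultimately show ?thesis
    using False by simp
qed

lemma card_permutes_commuting_at:
  assumes "finite S" "i \<in> S" "x permutes S"
  shows "card {y. y permutes S \<and> y (x i) = x (y i)}
       = card {j\<in>S. x j = j \<longleftrightarrow> x i = i} * fact (card S - (if x i = i then 1 else 2))"
proof -
  let ?Y = "{y. y permutes S \<and> y (x i) = x (y i)}"
  let ?J = "{j\<in>S. x j = j \<longleftrightarrow> x i = i}"
  have "(\<lambda>y. y i) ` ?Y \<subseteq> ?J"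
  proof
    fix j assume "j \<in> (\<lambda>y. y i) ` ?Y"
    then obtain y where y: "y permutes S" "y (x i) = x (y i)" and j: "j = y i"
      by blast
    show "j \<in> ?J"
      using permutes_commuting_at_fixpoint_iff[OF y] y(1) assms(2) j by (simp add: permutes_in_image)
  qed
  moreover have "finite ?Y"
    using finite_permutations[OF assms(1)] by (rule rev_finite_subset) blast
  ultimately have "card ?Y = (\<Sum>j\<in>?J. card {y\<in>?Y. y i = j})"
    using assms(1) by (intro card_eq_sum_card_fibres) auto
  also have "\<dots> = (\<Sum>j\<in>?J. fact (card S - (if x i = i then 1 else 2)))"
    using card_permutes_commuting_at_value[OF assms] by (intro sum.cong) auto
  finally show ?thesis
    by simp
qed

section \<open>Commutators of permutations evaluated at a point\<close>

definition perm_commutator :: "('a \<Rightarrow> 'a) \<Rightarrow> ('a \<Rightarrow> 'a) \<Rightarrow> 'a \<Rightarrow> 'a" where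
  "perm_commutator x y = inv' x \<circ> inv' y \<circ> x \<circ> y"

definition commutator_count :: "'a set \<Rightarrow> 'a \<Rightarrow> 'a \<Rightarrow> nat" where
  "commutator_count S i j =
     card {(x, y). x permutes S \<and> y permutes S \<and> perm_commutator x y i = j}"

lemma perm_commutator_permutes:
  "x permutes S \<Longrightarrow> y permutes S \<Longrightarrow> perm_commutator x y permutes S"
  by (simp add: perm_commutator_def permutes_compose permutes_inv)

lemma perm_commutator_apply_eq_iff:
  assumes "x permutes S" "y permutes S"
  shows "perm_commutator x y i = j \<longleftrightarrow> y (x j) = x (y i)"
proof -
  have "perm_commutator x y i = j \<longleftrightarrow> inv' x (inv' y (x (y i))) = j"
    by (simp add: perm_commutator_def)
  also have "\<dots> \<longleftrightarrow> x j = inv' y (x (y i))"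
    by (rule permutes_inv_eq[OF assms(1)])
  also have "\<dots> \<longleftrightarrow> y (x j) = x (y i)"
    by (metis permutes_inv_eq[OF assms(2)])
  finally show ?thesis .
qed

lemma commutator_count_altdef:
  "commutator_count S i j = card {(x, y). x permutes S \<and> y permutes S \<and> y (x j) = x (y i)}"
  unfolding commutator_count_def by (simp add: perm_commutator_apply_eq_iff cong: conj_cong)

lemma sum_commutator_count:
  assumes "finite S" "i \<in> S"
  shows "(\<Sum>j\<in>S. commutator_count S i j) = fact (card S) ^ 2"
proof -
  let ?G = "{p. p permutes S}"
  have "card (?G \<times> ?G)
      = (\<Sum>j\<in>S. card {z\<in>?G \<times> ?G. (case z of (x, y) \<Rightarrow> perm_commutator x y i) = j})"
    using assms finite_permutations[OF assms(1)]
    by (intro card_eq_sum_card_fibres) (auto simp: perm_commutator_permutes permutes_in_image)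
  also have "\<dots> = (\<Sum>j\<in>S. commutator_count S i j)"
    unfolding commutator_count_def by (intro sum.cong refl arg_cong[where f = card]) auto
  finally show ?thesis
    using assms(1) by (simp add: card_cartesian_product card_permutations[OF refl] power2_eq_square)
qed

lemma commutator_count_off_diagonal_eq:
  assumes "finite S" "i \<in> S" "j \<in> S" "k \<in> S" "j \<noteq> i" "k \<noteq> i"
  shows "commutator_count S i j = commutator_count S i k"
proof -
  define A where "A l = {(x, y). x permutes S \<and> y permutes S \<and> y (x l) = x (y i)}" for l
  have "card (A j) \<le> card (A k)" if "j \<in> S" "k \<in> S" "j \<noteq> i" "k \<noteq> i" for j k
  proof -
    define t where "t = transpose j k"
    define h where "h = (\<lambda>(x, y). (t \<circ> x \<circ> t, t \<circ> y \<circ> t))"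
    have tt: "t (t a) = a" for a
      by (simp add: t_def)
    have ti: "t i = i" and tk: "t k = j" and t: "t permutes S"
      using that by (simp_all add: t_def permutes_swap_id)
    have "inj_on h (A j)"
      by (rule inj_on_inverseI[where g = h]) (auto simp: h_def fun_eq_iff tt)
    moreover have "h (x, y) \<in> A k" if "(x, y) \<in> A j" for x y
    proof -
      have xy: "x permutes S" "y permutes S" "y (x j) = x (y i)"
        using that by (simp_all add: A_def)
      have "(t \<circ> y \<circ> t) ((t \<circ> x \<circ> t) k) = t (y (x j))"
        using tk tt by simp
      also have "\<dots> = (t \<circ> x \<circ> t) ((t \<circ> y \<circ> t) i)"
        using xy(3) ti tt by simp
      finally show ?thesis
        using xy t by (simp add: A_def h_def permutes_compose)
    qed
    then have "h ` A j \<subseteq> A k"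
      by auto
    moreover have "finite (A k)"
      by (rule finite_subset[of _ "{p. p permutes S} \<times> {p. p permutes S}"])
        (auto simp: A_def finite_permutations[OF assms(1)])
    ultimately show ?thesis
      by (simp add: card_inj_on_le)
  qed
  then show ?thesis
    using assms unfolding commutator_count_altdef A_def[symmetric] by (simp add: antisym)
qed

lemma commutator_count_diagonal_eq_sum:
  assumes "finite S" "i \<in> S"
  shows "commutator_count S i i
       = fact (card S - 1) * (\<Sum>p | p permutes S \<and> p i = i. card {j\<in>S. p j = j})
       + fact (card S - 2) * (\<Sum>p | p permutes S \<and> p i \<noteq> i. card {j\<in>S. p j \<noteq> j})"
proof -
  let ?G = "{p. p permutes S}"
  have finG: "finite ?G"
    using assms(1) by (rule finite_permutations)
  have "commutator_count S i i = card (Sigma ?G (\<lambda>x. {y. y permutes S \<and> y (x i) = x (y i)}))"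
    unfolding commutator_count_altdef by (rule arg_cong[where f = card]) auto
  also have "\<dots> = (\<Sum>x\<in>?G. card {y. y permutes S \<and> y (x i) = x (y i)})"
    using finG by (simp add: card_SigmaI)
  also have "\<dots> = (\<Sum>x\<in>?G. if x i = i then fact (card S - 1) * card {j\<in>S. x j = j}
                                   else fact (card S - 2) * card {j\<in>S. x j \<noteq> j})"
    using card_permutes_commuting_at[OF assms] by (intro sum.cong) auto
  also have "\<dots> = fact (card S - 1) * (\<Sum>p | p permutes S \<and> p i = i. card {j\<in>S. p j = j})
                + fact (card S - 2) * (\<Sum>p | p permutes S \<and> p i \<noteq> i. card {j\<in>S. p j \<noteq> j})"
    by (simp add: sum.If_cases[OF finG] sum_distrib_left Int_def set_diff_eq)
  finally show ?thesis .
qed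

lemma sum_card_nonfixpoints_off_stabilizer:
  assumes "finite S" "card S \<ge> 2" "i \<in> S"
  shows "real (\<Sum>p | p permutes S \<and> p i \<noteq> i. card {j\<in>S. p j \<noteq> j})
       = (real (card S) - 1) * fact (card S) - (real (card S) - 2) * fact (card S - 1)"
proof -
  define G where "G = {p. p permutes S}"
  define Gi where "Gi = {p. p permutes S \<and> p i = i}"
  define F where "F p = real (card {j\<in>S. p j = j})" for p
  have finG: "finite G"
    unfolding G_def using assms(1) by (rule finite_permutations)
  have ne: "S \<noteq> {}"
    using assms(3) by blast
  have Gi: "Gi \<subseteq> G" and off: "{p. p permutes S \<and> p i \<noteq> i} = G - Gi"
    by (auto simp: G_def Gi_def)
  have "real (card {j\<in>S. p j \<noteq> j}) = card S - F p" for p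
  proof -
    have "{j\<in>S. p j \<noteq> j} = S - {j\<in>S. p j = j}"
      by blast
    then show ?thesis
      using assms(1) by (simp add: card_Diff_subset of_nat_diff card_mono F_def)
  qed
  then have "real (\<Sum>p | p permutes S \<and> p i \<noteq> i. card {j\<in>S. p j \<noteq> j})
      = card S * card (G - Gi) - ((\<Sum>p\<in>G. F p) - (\<Sum>p\<in>Gi. F p))"
    unfolding off using finG Gi by (simp add: sum_subtractf sum_diff)
  moreover have "real (card (G - Gi)) = fact (card S) - fact (card S - 1)"
    using finG Gi card_mono[OF finG Gi] card_permutes_value[OF assms(1,3,3)] assms(1)
    by (simp add: card_Diff_subset of_nat_diff G_def Gi_def card_permutations[OF refl])
  moreover have "(\<Sum>p\<in>G. F p) = fact (card S)"
    using sum_card_fixpoints_permutes[OF assms(1) ne] by (simp add: F_def G_def flip: of_nat_sum)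
  moreover have "(\<Sum>p\<in>Gi. F p) = 2 * fact (card S - 1)"
    using sum_card_fixpoints_stabilizer[OF assms]
    by (simp add: F_def Gi_def flip: of_nat_sum)
  ultimately show ?thesis
    by (simp add: algebra_simps)
qed

lemma commutator_count_diagonal:
  assumes "finite S" "card S \<ge> 2" "i \<in> S"
  shows "(real (card S) - 1) * commutator_count S i i = fact (card S) ^ 2"
proof -
  obtain m where m: "card S = m + 2"
    using assms(2) by (metis add.commute le_Suc_ex)
  have "real (commutator_count S i i)
      = fact (card S - 1) * (2 * fact (card S - 1))
      + fact (card S - 2) * ((real (card S) - 1) * fact (card S) - (real (card S) - 2) * fact (card S - 1))"
    using commutator_count_diagonal_eq_sum[OF assms(1,3)] sum_card_fixpoints_stabilizer[OF assms]
      sum_card_nonfixpoints_off_stabilizer[OF assms]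
    by (simp flip: of_nat_sum)
  then show ?thesis
    unfolding m by (simp add: algebra_simps power2_eq_square)
qed

lemma commutator_count_off_diagonal:
  assumes "finite S" "card S \<ge> 2" "i \<in> S" "j \<in> S" "j \<noteq> i"
  shows "(real (card S) - 1) ^ 2 * commutator_count S i j = (real (card S) - 2) * fact (card S) ^ 2"
proof -
  have "fact (card S) ^ 2 = (\<Sum>l\<in>S. commutator_count S i l)"
    using sum_commutator_count[OF assms(1,3)] by simp
  also have "\<dots> = commutator_count S i i + (\<Sum>l\<in>S - {i}. commutator_count S i l)"
    using assms(1,3) by (simp add: sum.remove)
  also have "(\<Sum>l\<in>S - {i}. commutator_count S i l) = (\<Sum>l\<in>S - {i}. commutator_count S i j)"
    using assms by (intro sum.cong refl commutator_count_off_diagonal_eq) auto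
  also have "\<dots> = (card S - 1) * commutator_count S i j"
    using assms(1,3) by simp
  finally have sum_eq: "fact (card S) ^ 2 = commutator_count S i i + (card S - 1) * commutator_count S i j" .
  have "(fact (card S) ^ 2 :: real)
      = commutator_count S i i + (real (card S) - 1) * commutator_count S i j"
    using arg_cong[OF sum_eq, of real] assms(2) by (simp add: of_nat_diff)
  then have off: "(real (card S) - 1) * commutator_count S i j
      = (fact (card S) ^ 2 :: real) - commutator_count S i i"
    by simp
  have "(real (card S) - 1) ^ 2 * commutator_count S i j
      = (real (card S) - 1) * ((fact (card S) ^ 2 :: real) - commutator_count S i i)"
    by (simp add: power2_eq_square off)
  also have "\<dots> = (real (card S) - 2) * fact (card S) ^ 2"
    using commutator_count_diagonal[OF assms(1-3)] by (simp add: algebra_simps)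
  finally show ?thesis .
qed

lemma card_commutator_fibre_le:
  assumes "finite S" "card S \<ge> 2" "g permutes S"
  shows "real (card S) * (real (card S) - 1) ^ 2
           * card {(x, y). x permutes S \<and> y permutes S \<and> perm_commutator x y = g}
         \<le> fact (card S) ^ 2 * ((real (card S) - 1) ^ 2 + real (card {i\<in>S. g i = i}) - 1)"
proof -
  define n where "n = real (card S)"
  define N where "N = (fact (card S) :: real)"
  define C where "C = card {(x, y). x permutes S \<and> y permutes S \<and> perm_commutator x y = g}"
  have "C \<le> commutator_count S i (g i)" if "i \<in> S" for i
    unfolding C_def commutator_count_def
  proof (rule card_mono)
    show "finite {(x, y). x permutes S \<and> y permutes S \<and> perm_commutator x y i = g i}"
      by (rule finite_subset[of _ "{p. p permutes S} \<times> {p. p permutes S}"])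
        (auto simp: finite_permutations[OF assms(1)])
  qed auto
  then have "n * C \<le> (\<Sum>i\<in>S. real (commutator_count S i (g i)))"
    unfolding n_def using sum_mono[of S "\<lambda>_. real C"] by simp
  then have "(n - 1) ^ 2 * (n * C) \<le> (\<Sum>i\<in>S. (n - 1) ^ 2 * commutator_count S i (g i))"
    unfolding sum_distrib_left[symmetric] by (rule mult_left_mono) simp_all
  also have "\<dots> = (\<Sum>i\<in>S. (n - 2) * N ^ 2 + (if g i = i then N ^ 2 else 0))"
  proof (rule sum.cong[OF refl])
    fix i assume i: "i \<in> S"
    show "(n - 1) ^ 2 * commutator_count S i (g i) = (n - 2) * N ^ 2 + (if g i = i then N ^ 2 else 0)"
    proof (cases "g i = i")
      case True
      then show ?thesis
        using commutator_count_diagonal[OF assms(1,2) i]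
        by (simp add: n_def N_def power2_eq_square algebra_simps)
    next
      case False
      then show ?thesis
        using commutator_count_off_diagonal[OF assms(1,2) i _ False] i assms(3)
        by (simp add: n_def N_def permutes_in_image)
    qed
  qed
  also have "\<dots> = n * ((n - 2) * N ^ 2) + card {i\<in>S. g i = i} * N ^ 2"
    using assms(1) by (simp add: sum.distrib n_def flip: sum.inter_filter)
  also have "\<dots> = N ^ 2 * ((n - 1) ^ 2 + real (card {i\<in>S. g i = i}) - 1)"
    by (simp add: algebra_simps power2_eq_square)
  finally show ?thesis
    unfolding n_def N_def C_def by (simp add: algebra_simps)
qed

section \<open>Commuting probabilities in the symmetric group\<close>

lemma comm_prob_sym_group:
  "comm_prob (sym_group n) g
     = card {(x, y). x permutes {1..n} \<and> y permutes {1..n} \<and> perm_commutator x y = g}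
       / fact n ^ 2"
proof -
  have "commutator (sym_group n) x y = perm_commutator x y"
    if "x permutes {1..n}" "y permutes {1..n}" for x y
    using that by (simp add: commutator_def perm_commutator_def sym_group_mult sym_group_carrier)
  then show ?thesis
    unfolding comm_prob_def sym_group_card_carrier sym_group_carrier
    by (simp cong: conj_cong)
qed

lemma comm_prob_sym_group_le:
  assumes "n \<ge> 2" "g \<in> carrier (sym_group n)"
  shows "comm_prob (sym_group n) g \<le> 1 / real n * (1 + chi_std n g / (real n - 1) ^ 2)"
proof -
  have "real n * (real n - 1) ^ 2
          * card {(x, y). x permutes {1..n} \<and> y permutes {1..n} \<and> perm_commutator x y = g}
        \<le> fact n ^ 2 * ((real n - 1) ^ 2 + chi_std n g)"
    using card_commutator_fibre_le[of "{1..n}" g] assms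
    by (simp add: chi_std_def perm_char_def sym_group_carrier add_diff_eq)
  moreover have "real n - 1 > 0"
    using assms(1) by simp
  ultimately show ?thesis
    by (simp add: comm_prob_sym_group field_simps)
qed

theorem corollary4:
  fixes n :: nat
  assumes "n \<ge> 2"
  shows "(\<forall>g \<in> carrier (sym_group n).
            comm_prob (sym_group n) g
              \<le> (1 / real n) * (1 + chi_std n g / (real n - 1) ^ 2))
         \<and> comm_prob (sym_group n) \<one>\<^bsub>sym_group n\<^esub> \<le> 1 / (real n - 1)"
proof -
  have "{i \<in> {1..n}. id i = i} = {1..n}"
    by auto
  then have chi_one: "chi_std n \<one>\<^bsub>sym_group n\<^esub> = real n - 1"
    by (simp add: chi_std_def perm_char_def sym_group_one)
  have "(real n - 1) / (real n - 1) ^ 2 = 1 / (real n - 1)"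
    by (simp add: power2_eq_square)
  moreover have "real n - 1 > 0"
    using assms by simp
  ultimately have "1 / real n * (1 + chi_std n \<one>\<^bsub>sym_group n\<^esub> / (real n - 1) ^ 2)
      = 1 / (real n - 1)"
    unfolding chi_one by (simp add: field_simps)
  then show ?thesis
    using comm_prob_sym_group_le[OF assms]
      comm_prob_sym_group_le[OF assms, of "\<one>\<^bsub>sym_group n\<^esub>"]
    by (simp add: sym_group_one sym_group_carrier)
qed

end
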